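(* Let $\Phi$ be a channel matrix whose rows $P^1,\dots,P^4\in\Delta^n$ are in general position, let $Q^0$ be the equidistant point from $P^1,\dots,P^4$ with barycentric coordinate $\boldsymbol\lambda^0$, and suppose $\lambda^0_1<0$, $\lambda^0_2,\lambda^0_3,\lambda^0_4\ge0$. Let $Q^1=\pi(Q^0|L(P^2,P^3,P^4))$ with barycentric coordinate $\boldsymbol\lambda^1$ about $P^1,\dots,P^4$, and suppose $\lambda^1_2,\lambda^1_3,\lambda^1_4\ge0$. Then the output distribution achieving the channel capacity is $Q^\ast=Q^1$ and the channel capacity is $C=D(P^2\|Q^1)$.
   Context: $\Delta^n=\{Q:Q_j>0,\sum_jQ_j=1\}$, $\bar\Delta^m=\{\boldsymbol\lambda:\lambda_i\ge0,\sum_i\lambda_i=1\}$; $D(Q\|Q')=\sum_jQ_j\log(Q_j/Q'_j)$. Rows are in general position if $P^2-P^1,\dots,P^m-P^1$ are linearly independent. $L(S^1,\dots,S^r)=\{\sum_i\lambda_iS^i:\sum_i\lambda_i=1\}\cap\Delta^n$; for such an affine subspace $L$, $\pi(Q'|L)$ is the unique $Q\in L$ minimizing $D(Q\|Q')$. The barycentric coordinate of $Q\in L(P^1,\dots,P^m)$ is the unique $\boldsymbol\lambda$ with $\sum_i\lambda_i=1$, $Q=\sum_i\lambda_iP^i$. The equidistant point is the unique $Q^0\in L(P^1,\dots,P^m)$ with all $D(P^i\|Q^0)$ equal. Mutual information $I(\boldsymbol\lambda,\Phi)=\sum_{i,j}\lambda_iP^i_j\log(P^i_j/Q_j)$ with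 $Q=\boldsymbol\lambda\Phi$; capacity $C=\max_{\boldsymbol\lambda\in\bar\Delta^m}I(\boldsymbol\lambda,\Phi)$; the capacity-achieving output distribution is $Q^\ast=\boldsymbol\lambda^\ast\Phi$ for a maximizer $\boldsymbol\lambda^\ast$ (unique). *)

theory Defs
  imports Complex_Main
begin

text \<open>Vectors of length n are represented as functions nat \<Rightarrow> real with
  components 0..n-1; distributions are required to vanish outside {0..<n}
  (canonical representation). The channel matrix has rows P i, i \<in> {1..m}.\<close>

definition open_simplex :: "nat \<Rightarrow> (nat \<Rightarrow> real) set" where
  "open_simplex n = {Q. (\<forall>j<n. Q j > 0) \<and> (\<forall>j\<ge>n. Q j = 0) \<and> (\<Sum>j<n. Q j) = 1}"

definition closed_simplex :: "nat \<Rightarrow> (nat \<Rightarrow> real) set" where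
  "closed_simplex m = {l. (\<forall>i\<in>{1..m}. l i \<ge> 0) \<and> (\<forall>i. i \<notin> {1..m} \<longrightarrow> l i = 0)
                          \<and> (\<Sum>i\<in>{1..m}. l i) = 1}"

definition KL :: "nat \<Rightarrow> (nat \<Rightarrow> real) \<Rightarrow> (nat \<Rightarrow> real) \<Rightarrow> real" where
  "KL n Q Q' = (\<Sum>j<n. Q j * ln (Q j / Q' j))"

definition general_position :: "nat \<Rightarrow> nat \<Rightarrow> (nat \<Rightarrow> nat \<Rightarrow> real) \<Rightarrow> bool" where
  "general_position n m P \<longleftrightarrow>
     (\<forall>c :: nat \<Rightarrow> real. (\<forall>j<n. (\<Sum>i\<in>{2..m}. c i * (P i j - P 1 j)) = 0)
        \<longrightarrow> (\<forall>i\<in>{2..m}. c i = 0))"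

text \<open>L(S^i : i \<in> I) = affine hull of the points intersected with the open simplex.\<close>
definition affL :: "nat \<Rightarrow> (nat \<Rightarrow> nat \<Rightarrow> real) \<Rightarrow> nat set \<Rightarrow> (nat \<Rightarrow> real) set" where
  "affL n P I = {Q. Q \<in> open_simplex n \<and>
      (\<exists>l :: nat \<Rightarrow> real. (\<Sum>i\<in>I. l i) = 1 \<and> (\<forall>j<n. Q j = (\<Sum>i\<in>I. l i * P i j)))}"

definition proj :: "nat \<Rightarrow> (nat \<Rightarrow> real) set \<Rightarrow> (nat \<Rightarrow> real) \<Rightarrow> (nat \<Rightarrow> real)" where
  "proj n L Q' = (THE Q. Q \<in> L \<and> (\<forall>Q''\<in>L. KL n Q Q' \<le> KL n Q'' Q'))"

definition bary :: "nat \<Rightarrow> nat \<Rightarrow> (nat \<Rightarrow> nat \<Rightarrow> real) \<Rightarrow> (nat \<Rightarrow> real) \<Rightarrow> (nat \<Rightarrow> real)" where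
  "bary n m P Q = (THE l. (\<forall>i. i \<notin> {1..m} \<longrightarrow> l i = 0) \<and> (\<Sum>i\<in>{1..m}. l i) = 1 \<and>
                          (\<forall>j<n. Q j = (\<Sum>i\<in>{1..m}. l i * P i j)))"

definition equidistant :: "nat \<Rightarrow> nat \<Rightarrow> (nat \<Rightarrow> nat \<Rightarrow> real) \<Rightarrow> (nat \<Rightarrow> real)" where
  "equidistant n m P = (THE Q. Q \<in> affL n P {1..m} \<and>
      (\<forall>i\<in>{1..m}. \<forall>k\<in>{1..m}. KL n (P i) Q = KL n (P k) Q))"

definition out_dist :: "nat \<Rightarrow> nat \<Rightarrow> (nat \<Rightarrow> nat \<Rightarrow> real) \<Rightarrow> (nat \<Rightarrow> real) \<Rightarrow> (nat \<Rightarrow> real)" where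
  "out_dist n m P l = (\<lambda>j. if j < n then (\<Sum>i\<in>{1..m}. l i * P i j) else 0)"

definition mutual_info :: "nat \<Rightarrow> nat \<Rightarrow> (nat \<Rightarrow> nat \<Rightarrow> real) \<Rightarrow> (nat \<Rightarrow> real) \<Rightarrow> real" where
  "mutual_info n m P l = (\<Sum>i\<in>{1..m}. \<Sum>j<n. l i * P i j * ln (P i j / out_dist n m P l j))"

definition capacity :: "nat \<Rightarrow> nat \<Rightarrow> (nat \<Rightarrow> nat \<Rightarrow> real) \<Rightarrow> real" where
  "capacity n m P = (SUP l\<in>closed_simplex m. mutual_info n m P l)"

end

theory Submission
  imports Defs "HOL-Analysis.Analysis" "HOL-Real_Asymp.Real_Asymp"
begin

text \<open>Projecting the equidistant point \<open>Q\<^sup>0\<close> onto the face \<open>L(P\<^sup>2,P\<^sup>3,P\<^sup>4)\<close> lowers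
  the three distances \<open>D(P\<^sup>k\<parallel>\<cdot>)\<close>, \<open>k \<ge> 2\<close>, by the same amount \<open>D(Q\<^sup>1\<parallel>Q\<^sup>0)\<close>
  (Pythagorean identity for I-projections), and averaging with the barycentric weights
  \<open>\<lambda>\<^sup>0\<close>, where \<open>\<lambda>\<^sup>0\<^sub>1 < 0\<close>, shows that \<open>D(P\<^sup>1\<parallel>Q\<^sup>1)\<close> is no larger. So
  \<open>Q\<^sup>1 = \<lambda>\<^sup>1\<Phi>\<close> with \<open>\<lambda>\<^sup>1 \<ge> 0\<close> satisfies the Kuhn--Tucker conditions
  \<open>D(P\<^sup>i\<parallel>Q\<^sup>1) \<le> C\<close> with equality on the support of \<open>\<lambda>\<^sup>1\<close>, and the identity
  \<open>I(\<lambda>,\<Phi>) = \<Sum>\<^sub>i \<lambda>\<^sub>i D(P\<^sup>i\<parallel>Q\<^sup>1) - D(\<lambda>\<Phi>\<parallel>Q\<^sup>1)\<close> identifies \<open>C\<close> as the capacity and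
  \<open>Q\<^sup>1\<close> as the only optimal output. The equidistant point and the projection exist as
  maximisers of concave entropy functionals over a compact polytope; they are interior
  because \<open>x ln x\<close> has infinite slope at \<open>0\<close>.\<close>

definition xlnx :: "real \<Rightarrow> real" where "xlnx x = x * ln x"

lemma xlnx_tangent_le:
  assumes "x > 0" "y \<ge> 0"
  shows "xlnx x + (y - x) * (ln x + 1) \<le> xlnx y"
proof (cases "y = 0")
  case True then show ?thesis using assms by (simp add: xlnx_def algebra_simps)
next
  case False
  then have y: "y > 0" using assms by simp
  have "y * ln (x / y) \<le> y * (x / y - 1)"
    using ln_le_minus_one assms y by (simp add: mult_left_mono)
  moreover have "y * (x / y - 1) = x - y" using y by (simp add: field_simps)
  moreover have "y * ln (x / y) = y * ln x - y * ln y" using y assms by (simp add: ln_div algebra_simps)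
  ultimately show ?thesis unfolding xlnx_def by (simp add: algebra_simps)
qed

lemma xlnx_convex:
  assumes "q \<ge> 0" "b \<ge> 0" "0 \<le> t" "t \<le> 1" "(1 - t) * q + t * b > 0"
  shows "xlnx ((1 - t) * q + t * b) \<le> (1 - t) * xlnx q + t * xlnx b"
proof -
  let ?z = "(1 - t) * q + t * b"
  have "(1 - t) * (xlnx ?z + (q - ?z) * (ln ?z + 1)) + t * (xlnx ?z + (b - ?z) * (ln ?z + 1))
          \<le> (1 - t) * xlnx q + t * xlnx b"
    using assms by (intro add_mono mult_left_mono xlnx_tangent_le) auto
  also have "(1 - t) * (xlnx ?z + (q - ?z) * (ln ?z + 1)) + t * (xlnx ?z + (b - ?z) * (ln ?z + 1)) = xlnx ?z"
    by (simp add: algebra_simps)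
  finally show ?thesis .
qed

lemma continuous_on_xlnx: "continuous_on {0..} xlnx"
proof -
  have "continuous (at x within {0..}) xlnx" if "x \<ge> 0" for x
  proof (cases "x = 0")
    case True
    have "(xlnx \<longlongrightarrow> 0) (at_right 0)" unfolding xlnx_def by real_asymp
    then show ?thesis using True by (simp add: continuous_within at_within_Ici_at_right xlnx_def)
  next
    case False
    then have "continuous (at x) xlnx" using that unfolding xlnx_def by (intro continuous_intros) auto
    then show ?thesis using continuous_at_imp_continuous_within by blast
  qed
  then show ?thesis by (simp add: continuous_on_eq_continuous_within)
qed

lemma has_real_derivative_xlnx_line:
  assumes "a > 0"
  shows "((\<lambda>t. xlnx (a + t * b)) has_real_derivative b * (ln a + 1)) (at 0)"
proof -
  have "((\<lambda>t. (a + t * b) * ln (a + t * b)) has_real_derivative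
          b * ln (a + 0 * b) + (a + 0 * b) * (b / (a + 0 * b))) (at 0)"
    using assms by (intro derivative_eq_intros) auto
  then show ?thesis using assms unfolding xlnx_def by (simp add: algebra_simps)
qed

lemma local_max_imp_stationary:
  fixes a b :: "nat \<Rightarrow> real"
  assumes a_pos: "\<forall>j<n. a j > 0"
    and max: "\<And>t. \<forall>j<n. a j + t * b j > 0 \<Longrightarrow>
                \<alpha> * t - (\<Sum>j<n. xlnx (a j + t * b j)) \<le> - (\<Sum>j<n. xlnx (a j))"
  shows "\<alpha> = (\<Sum>j<n. b j * (ln (a j) + 1))"
proof -
  define f where "f t = \<alpha> * t - (\<Sum>j<n. xlnx (a j + t * b j))" for t
  have D: "(f has_real_derivative \<alpha> - (\<Sum>j<n. b j * (ln (a j) + 1))) (at 0)"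
    unfolding f_def
  proof (intro derivative_eq_intros)
    show "((\<lambda>t. xlnx (a j + t * b j)) has_real_derivative b j * (ln (a j) + 1)) (at 0)"
      if "j \<in> {..<n}" for j
      using has_real_derivative_xlnx_line a_pos that by auto
  qed auto
  define d where "d = Min (insert 1 ((\<lambda>j. a j / (\<bar>b j\<bar> + 1)) ` {..<n}))"
  have d_pos: "d > 0" unfolding d_def using a_pos by (subst Min_gr_iff) auto
  have "f y \<le> f 0" if y: "\<bar>0 - y\<bar> < d" for y
  proof -
    have "a j + y * b j > 0" if j: "j < n" for j
    proof -
      have "d \<le> a j / (\<bar>b j\<bar> + 1)" unfolding d_def using j by (intro Min_le) auto
      then have "\<bar>y\<bar> < a j / (\<bar>b j\<bar> + 1)" using y by simp
      then have "\<bar>y\<bar> * (\<bar>b j\<bar> + 1) < a j" by (simp add: field_simps)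
      moreover have "\<bar>y * b j\<bar> \<le> \<bar>y\<bar> * (\<bar>b j\<bar> + 1)" by (simp add: abs_mult mult_left_mono)
      ultimately show ?thesis by linarith
    qed
    then show ?thesis using max unfolding f_def by simp
  qed
  with DERIV_local_max[OF D d_pos] show ?thesis by simp
qed

lemma linear_coords_bounded_below:
  fixes M :: "'a::euclidean_space \<Rightarrow> nat \<Rightarrow> real"
  assumes lin: "\<And>j. linear (\<lambda>x. M x j)"
    and inj: "\<And>x. \<forall>j<n. M x j = 0 \<Longrightarrow> x = 0"
  shows "\<exists>c>0. \<forall>x. c * norm x \<le> (\<Sum>j<n. \<bar>M x j\<bar>)"
proof -
  have M_cont: "continuous_on S (\<lambda>x. M x j)" for S j
    using lin linear_continuous_on linear_conv_bounded_linear by blast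
  define \<phi> where "\<phi> x = (\<Sum>j<n. \<bar>M x j\<bar>)" for x
  have "sphere (0::'a) 1 \<noteq> {}"
  proof -
    obtain b :: 'a where "b \<in> Basis" using nonempty_Basis by blast
    then show ?thesis by (auto simp: norm_Basis)
  qed
  moreover have "continuous_on (sphere 0 1) \<phi>"
    unfolding \<phi>_def by (intro continuous_intros M_cont)
  ultimately obtain u :: 'a where u: "u \<in> sphere 0 1" and u_min: "\<forall>y\<in>sphere 0 1. \<phi> u \<le> \<phi> y"
    using continuous_attains_inf[OF compact_sphere] by blast
  have "\<phi> u \<noteq> 0"
  proof
    assume "\<phi> u = 0"
    then have "u = 0" unfolding \<phi>_def by (intro inj) (simp add: sum_nonneg_eq_0_iff)
    then show False using u by simp
  qed
  then have "\<phi> u > 0" unfolding \<phi>_def by (simp add: order_less_le sum_nonneg)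
  moreover have "\<phi> u * norm x \<le> \<phi> x" for x
  proof (cases "x = 0")
    case True then show ?thesis using linear_0[OF lin] by (simp add: \<phi>_def)
  next
    case False
    then have "\<phi> u \<le> \<phi> ((1 / norm x) *\<^sub>R x)" using u_min by simp
    also have "\<phi> ((1 / norm x) *\<^sub>R x) = \<phi> x / norm x"
      unfolding \<phi>_def linear_scale[OF lin] by (simp add: abs_mult sum_divide_distrib)
    finally show ?thesis using False by (simp add: field_simps)
  qed
  ultimately show ?thesis unfolding \<phi>_def by blast
qed

lemma compact_nonneg_polytope:
  fixes M :: "'a::euclidean_space \<Rightarrow> nat \<Rightarrow> real"
  assumes lin: "\<And>j. linear (\<lambda>x. M x j)"
    and inj: "\<And>x. \<forall>j<n. M x j = 0 \<Longrightarrow> x = 0"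
    and B_pos: "\<forall>j<n. B j > 0"
    and sum_M: "\<And>x. (\<Sum>j<n. M x j) = 0"
  shows "compact {x. \<forall>j<n. 0 \<le> B j + M x j}"
proof -
  define K where "K = {x. \<forall>j<n. 0 \<le> B j + M x j}"
  have M_cont: "continuous_on S (\<lambda>x. M x j)" for S j
    using lin linear_continuous_on linear_conv_bounded_linear by blast
  have "K = (\<Inter>j\<in>{..<n}. {x. 0 \<le> B j + M x j})" unfolding K_def by auto
  also have "closed \<dots>" by (intro closed_INT ballI closed_Collect_le continuous_intros M_cont)
  finally have "closed K" .
  have "\<exists>c>0. \<forall>x. c * norm x \<le> (\<Sum>j<n. \<bar>M x j\<bar>)"
    by (rule linear_coords_bounded_below[OF lin inj])
  then obtain c where c: "c > 0" "\<forall>x. c * norm x \<le> (\<Sum>j<n. \<bar>M x j\<bar>)" by blast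
  have "norm x \<le> 2 * (\<Sum>j<n. B j) / c" if "x \<in> K" for x
  proof -
    \<comment> \<open>\<open>M x j \<ge> -B j\<close> on \<open>K\<close>, and the \<open>M x j\<close> sum to zero\<close>
    have "(\<Sum>j<n. \<bar>M x j\<bar>) \<le> (\<Sum>j<n. (B j + M x j) + B j)"
      using that B_pos by (intro sum_mono) (auto simp: K_def abs_le_iff)
    also have "\<dots> = 2 * (\<Sum>j<n. B j)" using sum_M[of x] by (simp add: sum.distrib sum_distrib_left)
    finally have "(\<Sum>j<n. \<bar>M x j\<bar>) \<le> 2 * (\<Sum>j<n. B j)" .
    moreover have "c * norm x \<le> (\<Sum>j<n. \<bar>M x j\<bar>)" using c(2) by blast
    ultimately have "c * norm x \<le> 2 * (\<Sum>j<n. B j)" by linarith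
    then show ?thesis using c(1) by (simp add: pos_le_divide_eq mult.commute)
  qed
  then have "bounded K" unfolding bounded_iff by blast
  with \<open>closed K\<close> show ?thesis unfolding K_def by (simp add: compact_eq_bounded_closed)
qed

lemma sum_xlnx_shrink_le:
  fixes q B :: "nat \<Rightarrow> real"
  assumes q: "\<forall>j<n. q j \<ge> 0" and B: "\<forall>j<n. B j > 0" and t: "0 < t" "t < 1"
    and j0: "j0 < n" "q j0 = 0"
  shows "(\<Sum>j<n. xlnx ((1 - t) * q j + t * B j))
         \<le> (1 - t) * (\<Sum>j<n. xlnx (q j)) + t * (\<Sum>j<n. xlnx (B j)) + t * B j0 * ln t"
proof -
  define g where
    "g j = (1 - t) * xlnx (q j) + t * xlnx (B j) + (if j = j0 then t * B j0 * ln t else 0)" for j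
  have "xlnx ((1 - t) * q j + t * B j) \<le> g j" if j: "j < n" for j
  proof (cases "j = j0")
    case True
    then show ?thesis using j0 t B unfolding g_def xlnx_def by (simp add: ln_mult algebra_simps)
  next
    case False
    have "xlnx ((1 - t) * q j + t * B j) \<le> (1 - t) * xlnx (q j) + t * xlnx (B j)"
      using q B j t by (intro xlnx_convex) (auto intro!: add_nonneg_pos mult_nonneg_nonneg)
    then show ?thesis unfolding g_def using False by simp
  qed
  then have "(\<Sum>j<n. xlnx ((1 - t) * q j + t * B j)) \<le> (\<Sum>j<n. g j)" by (intro sum_mono) auto
  also have "\<dots> = (1 - t) * (\<Sum>j<n. xlnx (q j)) + t * (\<Sum>j<n. xlnx (B j)) + t * B j0 * ln t"
    unfolding g_def using j0 by (simp add: sum.distrib sum_distrib_left)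
  finally show ?thesis .
qed

text \<open>Moving a point with a vanishing coordinate towards \<open>0\<close> by a factor \<open>1 - t\<close> changes
  the objective by \<open>-t B\<^sub>j\<^sub>0 ln t + O(t)\<close>, since \<open>xlnx\<close> has infinite slope at \<open>0\<close>.\<close>

lemma boundary_point_not_max:
  fixes M :: "'a::real_vector \<Rightarrow> nat \<Rightarrow> real"
  assumes lin: "\<And>j. linear (\<lambda>x. M x j)"
    and B_pos: "\<forall>j<n. B j > 0"
    and ell_lin: "linear (\<lambda>x. ell x - ell 0)"
    and x: "\<forall>j<n. 0 \<le> B j + M x j"
    and j0: "j0 < n" "B j0 + M x j0 = 0"
  obtains y where "\<forall>j<n. 0 \<le> B j + M y j"
    and "ell x - (\<Sum>j<n. xlnx (B j + M x j)) < ell y - (\<Sum>j<n. xlnx (B j + M y j))"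
proof -
  define q where "q j = B j + M x j" for j
  define A where "A = ell 0 - ell x + (\<Sum>j<n. xlnx (q j)) - (\<Sum>j<n. xlnx (B j))"
  define b where "b = B j0"
  have b: "b > 0" using B_pos j0 b_def by auto
  define t where "t = exp (- (\<bar>A\<bar> + 1) / b)"
  have t: "0 < t" "t < 1" unfolding t_def using b by (auto simp: divide_neg_pos add_pos_nonneg)
  have ln_t: "- b * ln t = \<bar>A\<bar> + 1" unfolding t_def using b by simp
  define y where "y = (1 - t) *\<^sub>R x"
  have y_coord: "B j + M y j = (1 - t) * q j + t * B j" for j
    unfolding y_def linear_scale[OF lin] q_def by (simp add: algebra_simps)
  have ell_y: "ell y = (1 - t) * ell x + t * ell 0"
    using linear_scale[OF ell_lin, of "1 - t" x] unfolding y_def by (simp add: algebra_simps)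
  have q_nonneg: "\<forall>j<n. q j \<ge> 0" using x by (simp add: q_def)
  have "ell x - (\<Sum>j<n. xlnx (B j + M x j)) + t * (A - b * ln t)
        \<le> ell y - (\<Sum>j<n. xlnx (B j + M y j))"
    using sum_xlnx_shrink_le[OF q_nonneg B_pos t j0(1)] j0(2)
    unfolding y_coord ell_y A_def b_def q_def by (simp add: algebra_simps)
  moreover have "t * (A - b * ln t) > 0" using ln_t t abs_ge_self[of A] by simp
  ultimately have "ell x - (\<Sum>j<n. xlnx (B j + M x j)) < ell y - (\<Sum>j<n. xlnx (B j + M y j))"
    by linarith
  moreover have "\<forall>j<n. 0 \<le> B j + M y j"
    using q_nonneg B_pos t unfolding y_coord by (simp add: less_imp_le)
  ultimately show ?thesis using that by blast
qed

lemma exists_positive_maximiser: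
  fixes M :: "'a::euclidean_space \<Rightarrow> nat \<Rightarrow> real"
  assumes lin: "\<And>j. linear (\<lambda>x. M x j)"
    and inj: "\<And>x. \<forall>j<n. M x j = 0 \<Longrightarrow> x = 0"
    and B_pos: "\<forall>j<n. B j > 0"
    and sum_M: "\<And>x. (\<Sum>j<n. M x j) = 0"
    and ell_lin: "linear (\<lambda>x. ell x - ell 0)"
  shows "\<exists>x. (\<forall>j<n. B j + M x j > 0) \<and> (\<forall>y. (\<forall>j<n. 0 \<le> B j + M y j) \<longrightarrow>
           ell y - (\<Sum>j<n. xlnx (B j + M y j)) \<le> ell x - (\<Sum>j<n. xlnx (B j + M x j)))"
proof -
  define K where "K = {x. \<forall>j<n. 0 \<le> B j + M x j}"
  define F where "F y = ell y - (\<Sum>j<n. xlnx (B j + M y j))" for y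
  have M_cont: "continuous_on S (\<lambda>x. M x j)" for S j
    using lin linear_continuous_on linear_conv_bounded_linear by blast
  have "continuous_on S (\<lambda>x. ell x - ell 0)" for S
    using ell_lin linear_continuous_on linear_conv_bounded_linear by blast
  then have "continuous_on S ell" for S
    using continuous_on_add[OF _ continuous_on_const, of S "\<lambda>x. ell x - ell 0" "ell 0"] by simp
  then have "continuous_on K F" unfolding F_def
  proof (intro continuous_intros)
    show "continuous_on K (\<lambda>y. xlnx (B j + M y j))" if "j \<in> {..<n}" for j
      using that by (intro continuous_on_compose2[OF continuous_on_xlnx])
        (auto intro!: continuous_intros M_cont simp: K_def)
  qed
  moreover have "0 \<in> K" unfolding K_def using B_pos linear_0[OF lin] by auto
  moreover have "compact K" unfolding K_def by (rule compact_nonneg_polytope[OF lin inj B_pos sum_M])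
  ultimately obtain x where x: "x \<in> K" and x_max: "\<forall>y\<in>K. F y \<le> F x"
    using continuous_attains_sup by blast
  have "B j + M x j > 0" if j: "j < n" for j
  proof (rule ccontr)
    assume "\<not> B j + M x j > 0"
    moreover have x_nonneg: "\<forall>j<n. 0 \<le> B j + M x j" using x by (simp add: K_def)
    ultimately have "B j + M x j = 0" using j by force
    then obtain y where "\<forall>j<n. 0 \<le> B j + M y j"
      and "ell x - (\<Sum>j<n. xlnx (B j + M x j)) < ell y - (\<Sum>j<n. xlnx (B j + M y j))"
      using boundary_point_not_max[OF lin B_pos ell_lin x_nonneg j] by blast
    then have "y \<in> K" "F x < F y" unfolding K_def F_def by auto
    then show False using x_max by (simp add: not_le[symmetric])
  qed
  with x_max show ?thesis unfolding K_def F_def by blast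
qed

lemma positive_maximiser_critical:
  fixes M :: "'a::real_vector \<Rightarrow> nat \<Rightarrow> real"
  assumes lin: "\<And>j. linear (\<lambda>x. M x j)"
    and sum_M: "\<And>x. (\<Sum>j<n. M x j) = 0"
    and ell_lin: "linear (\<lambda>x. ell x - ell 0)"
    and x_pos: "\<forall>j<n. B j + M x j > 0"
    and x_max: "\<forall>y. (\<forall>j<n. 0 \<le> B j + M y j) \<longrightarrow>
           ell y - (\<Sum>j<n. xlnx (B j + M y j)) \<le> ell x - (\<Sum>j<n. xlnx (B j + M x j))"
  shows "ell d - ell 0 = (\<Sum>j<n. M d j * ln (B j + M x j))"
proof -
  have "ell d - ell 0 = (\<Sum>j<n. M d j * (ln (B j + M x j) + 1))"
  proof (rule local_max_imp_stationary[OF x_pos])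
    fix t assume t_pos: "\<forall>j<n. B j + M x j + t * M d j > 0"
    have shift: "M (x + t *\<^sub>R d) j = M x j + t * M d j" for j
      using linear_add[OF lin] linear_scale[OF lin] by simp
    have "ell (x + t *\<^sub>R d) = ell x + t * (ell d - ell 0)"
      using linear_add[OF ell_lin, of x "t *\<^sub>R d"] linear_scale[OF ell_lin, of t d] by simp
    moreover have "\<forall>j<n. 0 \<le> B j + M (x + t *\<^sub>R d) j"
      using t_pos by (simp add: shift add.assoc less_imp_le)
    then have "ell (x + t *\<^sub>R d) - (\<Sum>j<n. xlnx (B j + M (x + t *\<^sub>R d) j))
               \<le> ell x - (\<Sum>j<n. xlnx (B j + M x j))" using x_max by blast
    ultimately show "(ell d - ell 0) * t - (\<Sum>j<n. xlnx (B j + M x j + t * M d j))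
                     \<le> - (\<Sum>j<n. xlnx (B j + M x j))"
      by (simp add: shift algebra_simps)
  qed
  also have "\<dots> = (\<Sum>j<n. M d j * ln (B j + M x j))"
    using sum_M[of d] by (simp add: algebra_simps sum.distrib)
  finally show ?thesis .
qed

lemma open_simplex_pos: "Q \<in> open_simplex n \<Longrightarrow> j < n \<Longrightarrow> Q j > 0"
  and open_simplex_zero: "Q \<in> open_simplex n \<Longrightarrow> n \<le> j \<Longrightarrow> Q j = 0"
  and open_simplex_sum: "Q \<in> open_simplex n \<Longrightarrow> (\<Sum>j<n. Q j) = 1"
  by (auto simp: open_simplex_def)

lemma KL_self [simp]: "KL n Q Q = 0"
  unfolding KL_def by (intro sum.neutral) (auto simp: divide_self_if)

lemma KL_eq_sum_ln_diff:
  assumes "\<forall>j<n. Q j > 0" "\<forall>j<n. R j > 0"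
  shows "KL n Q R = (\<Sum>j<n. Q j * (ln (Q j) - ln (R j)))"
  unfolding KL_def using assms by (intro sum.cong) (auto simp: ln_div)

lemma KL_eq_xlnx_sum:
  assumes "\<forall>j<n. Q j > 0" "\<forall>j<n. R j > 0"
  shows "KL n Q R = (\<Sum>j<n. xlnx (Q j)) - (\<Sum>j<n. Q j * ln (R j))"
  unfolding KL_eq_sum_ln_diff[OF assms] xlnx_def by (simp add: algebra_simps sum_subtractf)

lemma ln_div_ge_diff:
  fixes q r :: real
  assumes "q > 0" "r > 0"
  shows "q - r \<le> q * ln (q / r)"
    and "q \<noteq> r \<Longrightarrow> q - r < q * ln (q / r)"
proof -
  have "ln (q / r) = - ln (r / q)" using assms by (simp add: ln_div)
  then have eq: "q * ln (q / r) = q - r - q * (ln (r / q) - (r / q - 1))"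
    using assms by (simp add: field_simps)
  show "q - r \<le> q * ln (q / r)"
    unfolding eq using assms ln_le_minus_one[of "r / q"] by (simp add: mult_nonneg_nonpos)
  assume "q \<noteq> r"
  then have "ln (r / q) < r / q - 1"
    using assms ln_le_minus_one[of "r / q"] ln_eq_minus_one[of "r / q"] by force
  then show "q - r < q * ln (q / r)" unfolding eq using assms by (simp add: mult_pos_neg)
qed

lemma KL_nonneg:
  assumes "Q \<in> open_simplex n" "R \<in> open_simplex n"
  shows "KL n Q R \<ge> 0"
proof -
  have "(\<Sum>j<n. Q j - R j) \<le> KL n Q R"
    unfolding KL_def using assms by (intro sum_mono ln_div_ge_diff) (auto simp: open_simplex_pos)
  moreover have "(\<Sum>j<n. Q j - R j) = 0"
    using assms by (simp add: sum_subtractf open_simplex_sum)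
  ultimately show ?thesis by simp
qed

lemma KL_eq_0_imp_eq:
  assumes Q: "Q \<in> open_simplex n" and R: "R \<in> open_simplex n" and "KL n Q R = 0"
  shows "Q = R"
proof (rule ccontr)
  assume "Q \<noteq> R"
  then obtain j where j: "Q j \<noteq> R j" by auto
  then have "j < n" using Q R by (metis not_less open_simplex_zero)
  then have "(\<Sum>j<n. Q j - R j) < KL n Q R"
    unfolding KL_def using Q R j
    by (intro sum_strict_mono_ex1 ballI ln_div_ge_diff bexI[of _ j]) (auto simp: open_simplex_pos)
  moreover have "(\<Sum>j<n. Q j - R j) = 0"
    using Q R by (simp add: sum_subtractf open_simplex_sum)
  ultimately show False using \<open>KL n Q R = 0\<close> by simp
qed

lemma KL_diff_affine_combination:
  assumes P: "\<forall>i\<in>I. P i \<in> open_simplex n"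
    and R: "R \<in> open_simplex n" and R': "R' \<in> open_simplex n"
    and Q: "Q \<in> open_simplex n" and Q_eq: "\<forall>j<n. Q j = (\<Sum>i\<in>I. l i * P i j)"
  shows "(\<Sum>i\<in>I. l i * (KL n (P i) R - KL n (P i) R')) = KL n Q R - KL n Q R'"
proof -
  have diff: "KL n S R - KL n S R' = (\<Sum>j<n. S j * (ln (R' j) - ln (R j)))"
    if "\<forall>j<n. S j > 0" for S
  proof -
    have pos: "\<forall>j<n. R j > 0" "\<forall>j<n. R' j > 0" using R R' by (auto simp: open_simplex_pos)
    show ?thesis unfolding KL_eq_sum_ln_diff[OF that pos(1)] KL_eq_sum_ln_diff[OF that pos(2)]
        sum_subtractf[symmetric]
      by (intro sum.cong) (auto simp: algebra_simps)
  qed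
  have "(\<Sum>i\<in>I. l i * (KL n (P i) R - KL n (P i) R'))
        = (\<Sum>i\<in>I. \<Sum>j<n. l i * P i j * (ln (R' j) - ln (R j)))"
  proof (intro sum.cong refl)
    fix i assume "i \<in> I"
    then have "\<forall>j<n. P i j > 0" using P open_simplex_pos by blast
    then show "l i * (KL n (P i) R - KL n (P i) R') = (\<Sum>j<n. l i * P i j * (ln (R' j) - ln (R j)))"
      by (simp add: diff sum_distrib_left mult.assoc)
  qed
  also have "\<dots> = (\<Sum>j<n. \<Sum>i\<in>I. l i * P i j * (ln (R' j) - ln (R j)))" by (rule sum.swap)
  also have "\<dots> = (\<Sum>j<n. Q j * (ln (R' j) - ln (R j)))"
    using Q_eq by (intro sum.cong refl) (simp add: sum_distrib_right)
  also have "\<dots> = KL n Q R - KL n Q R'" using diff Q by (simp add: open_simplex_pos)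
  finally show ?thesis .
qed

lemma out_dist_in_open_simplex:
  assumes rows: "\<forall>i\<in>{1..m}. P i \<in> open_simplex n" and l: "l \<in> closed_simplex m"
  shows "out_dist n m P l \<in> open_simplex n"
proof -
  have l_nonneg: "\<forall>i\<in>{1..m}. l i \<ge> 0" and l_sum: "(\<Sum>i\<in>{1..m}. l i) = 1"
    using l unfolding closed_simplex_def by auto
  obtain i where i: "i \<in> {1..m}" "l i > 0"
    using l_nonneg l_sum by (metis less_eq_real_def sum.neutral zero_neq_one)
  have "(\<Sum>i\<in>{1..m}. l i * P i j) > 0" if "j < n" for j
  proof (rule sum_pos2[of _ i])
    have pos: "\<And>k. k \<in> {1..m} \<Longrightarrow> P k j > 0" using rows that open_simplex_pos by blast
    show "0 < l i * P i j" using i pos by simp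
    show "\<And>k. k \<in> {1..m} \<Longrightarrow> 0 \<le> l k * P k j" using l_nonneg pos by (simp add: less_imp_le)
  qed (use i in auto)
  moreover have "(\<Sum>j<n. \<Sum>i\<in>{1..m}. l i * P i j) = 1"
  proof -
    have "(\<Sum>j<n. \<Sum>i\<in>{1..m}. l i * P i j) = (\<Sum>i\<in>{1..m}. l i * (\<Sum>j<n. P i j))"
      by (subst sum.swap) (simp add: sum_distrib_left)
    also have "\<dots> = 1" using rows l_sum by (simp add: open_simplex_sum)
    finally show ?thesis .
  qed
  ultimately show ?thesis by (simp add: open_simplex_def out_dist_def)
qed

lemma mutual_info_eq_KL_diff:
  assumes rows: "\<forall>i\<in>{1..m}. P i \<in> open_simplex n"
    and l: "l \<in> closed_simplex m" and R: "R \<in> open_simplex n"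
  shows "mutual_info n m P l = (\<Sum>i\<in>{1..m}. l i * KL n (P i) R) - KL n (out_dist n m P l) R"
proof -
  let ?Q = "out_dist n m P l"
  have "mutual_info n m P l = (\<Sum>i\<in>{1..m}. l i * KL n (P i) ?Q)"
    unfolding mutual_info_def KL_def by (simp add: sum_distrib_left mult.assoc out_dist_def)
  moreover have "(\<Sum>i\<in>{1..m}. l i * (KL n (P i) ?Q - KL n (P i) R)) = KL n ?Q ?Q - KL n ?Q R"
    using out_dist_in_open_simplex[OF rows l] rows R
    by (intro KL_diff_affine_combination) (auto simp: out_dist_def)
  ultimately show ?thesis by (simp add: algebra_simps sum_subtractf)
qed

text \<open>The sufficiency half of the Kuhn--Tucker conditions for channel capacity.\<close>

lemma capacity_eqI:
  assumes rows: "\<forall>i\<in>{1..m}. P i \<in> open_simplex n"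
    and R: "R \<in> open_simplex n"
    and lam: "lam \<in> closed_simplex m" and lam_out: "out_dist n m P lam = R"
    and bound: "\<And>i. i \<in> {1..m} \<Longrightarrow> KL n (P i) R \<le> C"
    and tight: "\<And>i. i \<in> {1..m} \<Longrightarrow> lam i \<noteq> 0 \<Longrightarrow> KL n (P i) R = C"
  shows "mutual_info n m P lam = C"
    and "capacity n m P = C"
    and "\<And>l. l \<in> closed_simplex m \<Longrightarrow> mutual_info n m P l = C \<Longrightarrow> out_dist n m P l = R"
proof -
  have le: "mutual_info n m P l \<le> C - KL n (out_dist n m P l) R" if l: "l \<in> closed_simplex m" for l
  proof -
    have "(\<Sum>i\<in>{1..m}. l i * KL n (P i) R) \<le> (\<Sum>i\<in>{1..m}. l i * C)"
      using l bound by (intro sum_mono mult_left_mono) (auto simp: closed_simplex_def)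
    also have "\<dots> = C" using l by (simp add: closed_simplex_def flip: sum_distrib_right)
    finally show ?thesis using mutual_info_eq_KL_diff[OF rows l R] by simp
  qed
  have KL_out_nonneg: "KL n (out_dist n m P l) R \<ge> 0" if "l \<in> closed_simplex m" for l
    using KL_nonneg out_dist_in_open_simplex[OF rows that] R by blast
  have "(\<Sum>i\<in>{1..m}. lam i * KL n (P i) R) = (\<Sum>i\<in>{1..m}. lam i * C)"
    using tight by (intro sum.cong) auto
  also have "\<dots> = C" using lam by (simp add: closed_simplex_def flip: sum_distrib_right)
  finally show I_lam: "mutual_info n m P lam = C"
    using mutual_info_eq_KL_diff[OF rows lam R] lam_out by simp
  show "capacity n m P = C"
    unfolding capacity_def
  proof (rule cSup_eq_maximum)
    show "C \<in> mutual_info n m P ` closed_simplex m" using I_lam lam by force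
    show "y \<le> C" if "y \<in> mutual_info n m P ` closed_simplex m" for y
      using that le KL_out_nonneg by fastforce
  qed
  show "out_dist n m P l = R" if l: "l \<in> closed_simplex m" and "mutual_info n m P l = C" for l
  proof (rule KL_eq_0_imp_eq)
    show "KL n (out_dist n m P l) R = 0" using le[OF l] KL_out_nonneg[OF l] that by simp
  qed (use out_dist_in_open_simplex[OF rows l] R in auto)
qed

lemma affL_affine_line:
  assumes Q: "Q \<in> affL n P I" and Q': "Q' \<in> affL n P I"
    and pos: "\<forall>j<n. Q j + t * (Q' j - Q j) > 0"
  shows "(\<lambda>j. Q j + t * (Q' j - Q j)) \<in> affL n P I"
proof -
  obtain l where l: "Q \<in> open_simplex n" "(\<Sum>i\<in>I. l i) = 1" "\<forall>j<n. Q j = (\<Sum>i\<in>I. l i * P i j)"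
    using Q unfolding affL_def by blast
  obtain l' where l': "Q' \<in> open_simplex n" "(\<Sum>i\<in>I. l' i) = 1" "\<forall>j<n. Q' j = (\<Sum>i\<in>I. l' i * P i j)"
    using Q' unfolding affL_def by blast
  show ?thesis
    unfolding affL_def
  proof (intro CollectI conjI exI)
    show "(\<lambda>j. Q j + t * (Q' j - Q j)) \<in> open_simplex n"
      using pos l(1) l'(1) unfolding open_simplex_def
      by (auto simp: sum.distrib sum_subtractf simp flip: sum_distrib_left)
    show "(\<Sum>i\<in>I. l i + t * (l' i - l i)) = 1"
      using l(2) l'(2) by (simp add: sum.distrib sum_subtractf flip: sum_distrib_left)
    show "\<forall>j<n. Q j + t * (Q' j - Q j) = (\<Sum>i\<in>I. (l i + t * (l' i - l i)) * P i j)"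
      using l(3) l'(3) by (simp add: algebra_simps sum.distrib sum_distrib_left sum_subtractf)
  qed
qed

lemma affL_row:
  assumes "k \<in> I" "finite I" "P k \<in> open_simplex n"
  shows "P k \<in> affL n P I"
  unfolding affL_def
proof (intro CollectI conjI exI)
  show "(\<Sum>i\<in>I. if i = k then 1 else 0 :: real) = 1" using assms by simp
  have "(\<Sum>i\<in>I. (if i = k then 1 else 0) * P i j) = (\<Sum>i\<in>I. if i = k then P i j else 0)" for j
    by (intro sum.cong) auto
  then show "\<forall>j<n. P k j = (\<Sum>i\<in>I. (if i = k then 1 else 0) * P i j)"
    using assms by simp
qed (use assms in auto)

text \<open>Minimality of \<open>Q\<close> along the line through \<open>Q\<close> and \<open>Q''\<close> forces the first variation
  \<open>\<Sum>\<^sub>j (Q'' j - Q j) (ln Q j - ln R j)\<close>, which is the defect in the identity, to vanish.\<close>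

lemma KL_pythagoras:
  assumes Q: "Q \<in> affL n P I" and R: "R \<in> open_simplex n"
    and min: "\<forall>Q''\<in>affL n P I. KL n Q R \<le> KL n Q'' R" and Q'': "Q'' \<in> affL n P I"
  shows "KL n Q'' R = KL n Q'' Q + KL n Q R"
proof -
  have Q_os: "Q \<in> open_simplex n" and Q''_os: "Q'' \<in> open_simplex n"
    using Q Q'' unfolding affL_def by auto
  have Q_pos: "\<forall>j<n. Q j > 0" and Q''_pos: "\<forall>j<n. Q'' j > 0" and R_pos: "\<forall>j<n. R j > 0"
    using Q_os Q''_os R open_simplex_pos by blast+
  define b where "b j = Q'' j - Q j" for j
  define \<alpha> where "\<alpha> = (\<Sum>j<n. b j * ln (R j))"
  have "\<alpha> = (\<Sum>j<n. b j * (ln (Q j) + 1))"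
  proof (rule local_max_imp_stationary[OF Q_pos])
    fix t assume t_pos: "\<forall>j<n. Q j + t * b j > 0"
    define Qt where "Qt j = Q j + t * b j" for j
    have "Qt \<in> affL n P I"
      unfolding Qt_def b_def using affL_affine_line[OF Q Q''] t_pos by (simp add: b_def)
    then have "KL n Q R \<le> KL n Qt R" using min by blast
    moreover have "KL n Qt R = (\<Sum>j<n. xlnx (Qt j)) - (\<Sum>j<n. Q j * ln (R j)) - t * \<alpha>"
      unfolding KL_eq_xlnx_sum[OF t_pos[folded Qt_def] R_pos] Qt_def \<alpha>_def
      by (simp add: algebra_simps sum.distrib sum_distrib_left)
    moreover have "KL n Q R = (\<Sum>j<n. xlnx (Q j)) - (\<Sum>j<n. Q j * ln (R j))"
      by (rule KL_eq_xlnx_sum[OF Q_pos R_pos])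
    ultimately show "\<alpha> * t - (\<Sum>j<n. xlnx (Q j + t * b j)) \<le> - (\<Sum>j<n. xlnx (Q j))"
      unfolding Qt_def by (simp add: algebra_simps)
  qed
  also have "\<dots> = (\<Sum>j<n. b j * ln (Q j))"
    using Q_os Q''_os by (simp add: b_def algebra_simps sum.distrib sum_subtractf open_simplex_sum)
  finally have "(\<Sum>j<n. b j * (ln (Q j) - ln (R j))) = 0"
    unfolding \<alpha>_def by (simp add: algebra_simps sum_subtractf)
  moreover have "KL n Q'' R - KL n Q'' Q - KL n Q R = (\<Sum>j<n. b j * (ln (Q j) - ln (R j)))"
    unfolding KL_eq_sum_ln_diff[OF Q''_pos R_pos] KL_eq_sum_ln_diff[OF Q''_pos Q_pos]
      KL_eq_sum_ln_diff[OF Q_pos R_pos] b_def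
    by (simp add: sum_subtractf[symmetric] algebra_simps)
  ultimately show ?thesis by simp
qed

lemma proj_eqI:
  assumes Q: "Q \<in> affL n P I" and R: "R \<in> open_simplex n"
    and min: "\<forall>Q''\<in>affL n P I. KL n Q R \<le> KL n Q'' R"
  shows "proj n (affL n P I) R = Q"
  unfolding proj_def
proof (rule the_equality)
  show "Q \<in> affL n P I \<and> (\<forall>Q''\<in>affL n P I. KL n Q R \<le> KL n Q'' R)" using Q min by blast
  fix Q' assume Q': "Q' \<in> affL n P I \<and> (\<forall>Q''\<in>affL n P I. KL n Q' R \<le> KL n Q'' R)"
  then have "KL n Q' R = KL n Q R" using Q min by (meson order_antisym)
  then have "KL n Q' Q = 0" using KL_pythagoras[OF Q R min] Q' by simp
  then show "Q' = Q" using KL_eq_0_imp_eq Q Q' unfolding affL_def by blast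
qed

lemma bary_eqI:
  assumes gp: "general_position n m P"
    and l_zero: "\<forall>i. i \<notin> {1..m} \<longrightarrow> l i = 0" and l_sum: "(\<Sum>i\<in>{1..m}. l i) = 1"
    and Q_eq: "\<forall>j<n. Q j = (\<Sum>i\<in>{1..m}. l i * P i j)"
  shows "bary n m P Q = l"
  unfolding bary_def
proof (rule the_equality)
  show "(\<forall>i. i \<notin> {1..m} \<longrightarrow> l i = 0) \<and> (\<Sum>i\<in>{1..m}. l i) = 1 \<and> (\<forall>j<n. Q j = (\<Sum>i\<in>{1..m}. l i * P i j))"
    using assms by blast
  fix l' assume l': "(\<forall>i. i \<notin> {1..m} \<longrightarrow> l' i = 0) \<and> (\<Sum>i\<in>{1..m}. l' i) = 1 \<and>
                     (\<forall>j<n. Q j = (\<Sum>i\<in>{1..m}. l' i * P i j))"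
  define c where "c i = l' i - l i" for i
  have "m \<noteq> 0" using l_sum by (rule contrapos_pn) simp
  then have split: "{1..m} = insert 1 {2..m}" by auto
  have c_sum: "c 1 + (\<Sum>i\<in>{2..m}. c i) = 0"
    using l' l_sum unfolding c_def split by (simp add: sum_subtractf)
  have "(\<Sum>i\<in>{2..m}. c i * (P i j - P 1 j)) = 0" if j: "j < n" for j
  proof -
    have "c 1 * P 1 j + (\<Sum>i\<in>{2..m}. c i * P i j) = 0"
      using l' Q_eq j unfolding c_def split by (simp add: algebra_simps sum_subtractf)
    moreover have "sum c {2..m} = - c 1" using c_sum by simp
    ultimately show ?thesis by (simp add: algebra_simps sum_subtractf flip: sum_distrib_right)
  qed
  then have "\<forall>i\<in>{2..m}. c i = 0" using gp unfolding general_position_def by blast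
  moreover from this have "c 1 = 0" using c_sum by simp
  ultimately have "\<forall>i\<in>{1..m}. c i = 0" unfolding split by blast
  then show "l' = l" using l' l_zero unfolding c_def by (metis eq_iff_diff_eq_0 ext)
qed

lemma bary_of_affL:
  assumes gp: "general_position n m P" and I: "I \<subseteq> {1..m}" and Q: "Q \<in> affL n P I"
  shows "\<forall>i. i \<notin> I \<longrightarrow> bary n m P Q i = 0"
    and "(\<Sum>i\<in>{1..m}. bary n m P Q i) = 1"
    and "\<forall>j<n. Q j = (\<Sum>i\<in>{1..m}. bary n m P Q i * P i j)"
proof -
  obtain l where l: "(\<Sum>i\<in>I. l i) = 1" "\<forall>j<n. Q j = (\<Sum>i\<in>I. l i * P i j)"
    using Q unfolding affL_def by blast
  define l' where "l' i = (if i \<in> I then l i else 0)" for i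
  have sum_l': "(\<Sum>i\<in>{1..m}. l' i * f i) = (\<Sum>i\<in>I. l i * f i)" for f
  proof -
    have "(\<Sum>i\<in>{1..m}. l' i * f i) = (\<Sum>i\<in>{1..m}. if i \<in> I then l i * f i else 0)"
      unfolding l'_def by (intro sum.cong) auto
    also have "\<dots> = (\<Sum>i\<in>I. l i * f i)" using I by (simp flip: sum.inter_restrict add: Int_absorb1)
    finally show ?thesis .
  qed
  have l'_zero: "\<forall>i. i \<notin> {1..m} \<longrightarrow> l' i = 0" using I by (auto simp: l'_def)
  have l'_sum: "(\<Sum>i\<in>{1..m}. l' i) = 1" using sum_l'[of "\<lambda>_. 1"] l(1) by simp
  have Q_eq: "\<forall>j<n. Q j = (\<Sum>i\<in>{1..m}. l' i * P i j)" using sum_l' l(2) by simp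
  have "bary n m P Q = l'" by (rule bary_eqI[OF gp l'_zero l'_sum Q_eq])
  then show "\<forall>i. i \<notin> I \<longrightarrow> bary n m P Q i = 0"
    and "(\<Sum>i\<in>{1..m}. bary n m P Q i) = 1"
    and "\<forall>j<n. Q j = (\<Sum>i\<in>{1..m}. bary n m P Q i * P i j)"
    using l'_sum Q_eq by (auto simp: l'_def)
qed

lemma KL_between_equidistant_points:
  assumes rows: "\<forall>i\<in>{1..m}. P i \<in> open_simplex n"
    and Q: "Q \<in> affL n P {1..m}" and Q_eq: "\<forall>i\<in>{1..m}. KL n (P i) Q = KL n (P 1) Q"
    and Q': "Q' \<in> open_simplex n" and Q'_eq: "\<forall>i\<in>{1..m}. KL n (P i) Q' = KL n (P 1) Q'"
  shows "KL n Q Q' = KL n (P 1) Q' - KL n (P 1) Q"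
proof -
  obtain l where l: "Q \<in> open_simplex n" "(\<Sum>i\<in>{1..m}. l i) = 1" "\<forall>j<n. Q j = (\<Sum>i\<in>{1..m}. l i * P i j)"
    using Q unfolding affL_def by blast
  have "KL n Q Q' = (\<Sum>i\<in>{1..m}. l i * (KL n (P i) Q' - KL n (P i) Q))"
    using KL_diff_affine_combination[OF rows Q' l(1) l(1) l(3)] by simp
  also have "\<dots> = (\<Sum>i\<in>{1..m}. l i * (KL n (P 1) Q' - KL n (P 1) Q))"
  proof (rule sum.cong)
    fix i assume "i \<in> {1..m}"
    then have "KL n (P i) Q = KL n (P 1) Q" "KL n (P i) Q' = KL n (P 1) Q'" using Q_eq Q'_eq by blast+
    then show "l i * (KL n (P i) Q' - KL n (P i) Q) = l i * (KL n (P 1) Q' - KL n (P 1) Q)" by simp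
  qed simp
  also have "\<dots> = KL n (P 1) Q' - KL n (P 1) Q" using l(2) by (simp flip: sum_distrib_right)
  finally show ?thesis .
qed

lemma equidistant_eqI:
  assumes rows: "\<forall>i\<in>{1..m}. P i \<in> open_simplex n"
    and Q: "Q \<in> affL n P {1..m}" and Q_eq: "\<forall>i\<in>{1..m}. KL n (P i) Q = KL n (P 1) Q"
  shows "equidistant n m P = Q"
  unfolding equidistant_def
proof (rule the_equality)
  show "Q \<in> affL n P {1..m} \<and> (\<forall>i\<in>{1..m}. \<forall>k\<in>{1..m}. KL n (P i) Q = KL n (P k) Q)"
  proof (intro conjI ballI)
    fix i k assume "i \<in> {1..m}" "k \<in> {1..m}"
    then have "KL n (P i) Q = KL n (P 1) Q" "KL n (P k) Q = KL n (P 1) Q" using Q_eq by blast+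
    then show "KL n (P i) Q = KL n (P k) Q" by simp
  qed (rule Q)
  have "1 \<in> {1..m}" using Q by (auto simp: affL_def intro: ccontr)
  fix Q' assume Q': "Q' \<in> affL n P {1..m} \<and> (\<forall>i\<in>{1..m}. \<forall>k\<in>{1..m}. KL n (P i) Q' = KL n (P k) Q')"
  with \<open>1 \<in> {1..m}\<close> have Q'_eq: "\<forall>i\<in>{1..m}. KL n (P i) Q' = KL n (P 1) Q'" by blast
  have os: "Q \<in> open_simplex n" "Q' \<in> open_simplex n" using Q Q' unfolding affL_def by auto
  have "KL n Q Q' = KL n (P 1) Q' - KL n (P 1) Q"
    using KL_between_equidistant_points[OF rows Q Q_eq os(2) Q'_eq] .
  moreover have "KL n Q' Q = KL n (P 1) Q - KL n (P 1) Q'"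
    using KL_between_equidistant_points[OF rows _ Q'_eq os(1) Q_eq] Q' by blast
  moreover have "KL n Q Q' \<ge> 0" "KL n Q' Q \<ge> 0" using KL_nonneg os by blast+
  ultimately have "KL n Q' Q = 0" by linarith
  then show "Q' = Q" using KL_eq_0_imp_eq os by blast
qed

lemma KL_rows_at_face_projection:
  assumes rows: "\<forall>i\<in>{1..m}. P i \<in> open_simplex n"
    and Q0: "Q0 \<in> open_simplex n" "\<forall>j<n. Q0 j = (\<Sum>i\<in>{1..m}. lam i * P i j)"
    and lam_sum: "(\<Sum>i\<in>{1..m}. lam i) = 1" and lam_neg: "lam 1 < 0"
    and Q0_eq: "\<forall>i\<in>{1..m}. KL n (P i) Q0 = KL n (P 1) Q0"
    and Q1: "Q1 \<in> affL n P {2..m}" and Q1_min: "\<forall>Q''\<in>affL n P {2..m}. KL n Q1 Q0 \<le> KL n Q'' Q0"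
  shows "\<And>i. i \<in> {2..m} \<Longrightarrow> KL n (P i) Q1 = KL n (P 1) Q0 - KL n Q1 Q0"
    and "KL n (P 1) Q1 \<le> KL n (P 1) Q0 - KL n Q1 Q0"
proof -
  define D where "D = KL n Q1 Q0"
  have Q1_os: "Q1 \<in> open_simplex n" using Q1 by (simp add: affL_def)
  have face: "KL n (P i) Q1 - KL n (P i) Q0 = - D" if "i \<in> {2..m}" for i
    using KL_pythagoras[OF Q1 Q0(1) Q1_min affL_row[OF that]] that rows unfolding D_def by simp
  show "\<And>i. i \<in> {2..m} \<Longrightarrow> KL n (P i) Q1 = KL n (P 1) Q0 - KL n Q1 Q0"
  proof -
    fix i assume i: "i \<in> {2..m}"
    then have "KL n (P i) Q0 = KL n (P 1) Q0" using Q0_eq by (metis atLeastAtMost_iff one_le_numeral order_trans)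
    with face[OF i] show "KL n (P i) Q1 = KL n (P 1) Q0 - KL n Q1 Q0" unfolding D_def by simp
  qed
  have "m \<noteq> 0" using lam_sum by (rule contrapos_pn) simp
  then have split: "{1..m} = insert 1 {2..m}" by auto
  have "0 \<le> KL n Q0 Q1" using KL_nonneg Q0(1) Q1_os by blast
  also have "KL n Q0 Q1 = (\<Sum>i\<in>{1..m}. lam i * (KL n (P i) Q1 - KL n (P i) Q0))"
    using KL_diff_affine_combination[OF rows Q1_os Q0(1) Q0] by simp
  also have "\<dots> = lam 1 * (KL n (P 1) Q1 - KL n (P 1) Q0) - (1 - lam 1) * D"
  proof -
    have "(\<Sum>i\<in>{2..m}. lam i * (KL n (P i) Q1 - KL n (P i) Q0)) = (\<Sum>i\<in>{2..m}. lam i) * - D"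
      using face by (simp add: sum_distrib_right sum_negf)
    moreover have "(\<Sum>i\<in>{2..m}. lam i) = 1 - lam 1" using lam_sum unfolding split by simp
    ultimately show ?thesis unfolding split by (simp add: algebra_simps)
  qed
  finally have "D \<le> lam 1 * (KL n (P 1) Q1 - KL n (P 1) Q0 + D)" by (simp add: algebra_simps)
  moreover have "D \<ge> 0" using KL_nonneg Q0(1) Q1_os unfolding D_def by blast
  ultimately show "KL n (P 1) Q1 \<le> KL n (P 1) Q0 - KL n Q1 Q0"
    using lam_neg unfolding D_def by (smt (verit) mult_neg_pos)
qed

lemma sum_1_to_4: "(\<Sum>i\<in>{1..4::nat}. f i) = f 1 + f 2 + f 3 + f 4"
  and sum_2_to_4: "(\<Sum>i\<in>{2..4::nat}. f i) = f 2 + f 3 + f 4"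
  by (simp_all add: numeral_eq_Suc sum.atLeast_Suc_atMost)

definition hull_dir :: "(nat \<Rightarrow> nat \<Rightarrow> real) \<Rightarrow> real \<times> real \<times> real \<Rightarrow> nat \<Rightarrow> real" where
  "hull_dir P x j = fst x * (P 2 j - P 1 j) + fst (snd x) * (P 3 j - P 1 j) + snd (snd x) * (P 4 j - P 1 j)"

definition face_dir :: "(nat \<Rightarrow> nat \<Rightarrow> real) \<Rightarrow> real \<times> real \<Rightarrow> nat \<Rightarrow> real" where
  "face_dir P x j = fst x * (P 3 j - P 2 j) + snd x * (P 4 j - P 2 j)"

lemma linear_hull_dir: "linear (\<lambda>x. hull_dir P x j)"
  by (auto intro!: linearI simp: hull_dir_def algebra_simps)

lemma linear_face_dir: "linear (\<lambda>x. face_dir P x j)"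
  by (auto intro!: linearI simp: face_dir_def algebra_simps)

lemma sum_hull_dir: "\<forall>i\<in>{1..4}. P i \<in> open_simplex n \<Longrightarrow> (\<Sum>j<n. hull_dir P x j) = 0"
  by (simp add: hull_dir_def sum.distrib sum_subtractf open_simplex_sum flip: sum_distrib_left)

lemma sum_face_dir: "\<forall>i\<in>{1..4}. P i \<in> open_simplex n \<Longrightarrow> (\<Sum>j<n. face_dir P x j) = 0"
  by (simp add: face_dir_def sum.distrib sum_subtractf open_simplex_sum flip: sum_distrib_left)

lemma hull_dir_eq_0_imp:
  assumes gp: "general_position n 4 P" and "\<forall>j<n. hull_dir P x j = 0"
  shows "x = 0"
proof -
  define w where "w i = (if i = 2 then fst x else if i = 3 then fst (snd x) else snd (snd x))" for i :: nat
  have "\<forall>j<n. (\<Sum>i\<in>{2..4}. w i * (P i j - P 1 j)) = 0"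
    using assms(2) unfolding sum_2_to_4 w_def hull_dir_def by simp
  then have "\<forall>i\<in>{2..4}. w i = 0" using gp unfolding general_position_def by blast
  then have "w 2 = 0" "w 3 = 0" "w 4 = 0" by auto
  then show ?thesis unfolding w_def by (simp add: prod_eq_iff)
qed

lemma face_dir_eq_0_imp:
  assumes gp: "general_position n 4 P" and "\<forall>j<n. face_dir P x j = 0"
  shows "x = 0"
proof -
  have "\<forall>j<n. hull_dir P (- (fst x + snd x), fst x, snd x) j = 0"
    using assms(2) by (simp add: hull_dir_def face_dir_def algebra_simps)
  then have "(- (fst x + snd x), fst x, snd x) = 0" by (rule hull_dir_eq_0_imp[OF gp])
  then show ?thesis by (simp add: prod_eq_iff)
qed

lemma affL_1_4_iff:
  "Q \<in> affL n P {1..4} \<longleftrightarrow> Q \<in> open_simplex n \<and> (\<exists>x. \<forall>j<n. Q j = P 1 j + hull_dir P x j)"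
proof -
  have "(\<exists>l. (\<Sum>i\<in>{1..4}. l i) = 1 \<and> (\<forall>j<n. Q j = (\<Sum>i\<in>{1..4}. l i * P i j))) \<longleftrightarrow>
        (\<exists>x. \<forall>j<n. Q j = P 1 j + hull_dir P x j)"
  proof
    assume "\<exists>l. (\<Sum>i\<in>{1..4}. l i) = 1 \<and> (\<forall>j<n. Q j = (\<Sum>i\<in>{1..4}. l i * P i j))"
    then obtain l :: "nat \<Rightarrow> real" where l_sum: "l 1 + l 2 + l 3 + l 4 = 1"
      and Q_eq: "\<forall>j<n. Q j = l 1 * P 1 j + l 2 * P 2 j + l 3 * P 3 j + l 4 * P 4 j"
      unfolding sum_1_to_4 by auto
    have l1: "l 1 = 1 - l 2 - l 3 - l 4" using l_sum by simp
    have "\<forall>j<n. Q j = P 1 j + hull_dir P (l 2, l 3, l 4) j"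
      using Q_eq unfolding l1 by (simp add: hull_dir_def algebra_simps)
    then show "\<exists>x. \<forall>j<n. Q j = P 1 j + hull_dir P x j" by blast
  next
    assume "\<exists>x. \<forall>j<n. Q j = P 1 j + hull_dir P x j"
    then obtain x where "\<forall>j<n. Q j = P 1 j + hull_dir P x j" by blast
    moreover define w where
      "w i = (if i = 2 then fst x else if i = 3 then fst (snd x) else if i = 4 then snd (snd x)
              else 1 - fst x - fst (snd x) - snd (snd x))" for i :: nat
    ultimately have "(\<Sum>i\<in>{1..4}. w i) = 1" "\<forall>j<n. Q j = (\<Sum>i\<in>{1..4}. w i * P i j)"
      unfolding sum_1_to_4 by (simp_all add: w_def hull_dir_def algebra_simps)
    then show "\<exists>l. (\<Sum>i\<in>{1..4}. l i) = 1 \<and> (\<forall>j<n. Q j = (\<Sum>i\<in>{1..4}. l i * P i j))"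
      by blast
  qed
  then show ?thesis unfolding affL_def by blast
qed

lemma affL_2_4_iff:
  "Q \<in> affL n P {2..4} \<longleftrightarrow> Q \<in> open_simplex n \<and> (\<exists>x. \<forall>j<n. Q j = P 2 j + face_dir P x j)"
proof -
  have "(\<exists>l. (\<Sum>i\<in>{2..4}. l i) = 1 \<and> (\<forall>j<n. Q j = (\<Sum>i\<in>{2..4}. l i * P i j))) \<longleftrightarrow>
        (\<exists>x. \<forall>j<n. Q j = P 2 j + face_dir P x j)"
  proof
    assume "\<exists>l. (\<Sum>i\<in>{2..4}. l i) = 1 \<and> (\<forall>j<n. Q j = (\<Sum>i\<in>{2..4}. l i * P i j))"
    then obtain l :: "nat \<Rightarrow> real" where l_sum: "l 2 + l 3 + l 4 = 1"
      and Q_eq: "\<forall>j<n. Q j = l 2 * P 2 j + l 3 * P 3 j + l 4 * P 4 j"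
      unfolding sum_2_to_4 by auto
    have l2: "l 2 = 1 - l 3 - l 4" using l_sum by simp
    have "\<forall>j<n. Q j = P 2 j + face_dir P (l 3, l 4) j"
      using Q_eq unfolding l2 by (simp add: face_dir_def algebra_simps)
    then show "\<exists>x. \<forall>j<n. Q j = P 2 j + face_dir P x j" by blast
  next
    assume "\<exists>x. \<forall>j<n. Q j = P 2 j + face_dir P x j"
    then obtain x where "\<forall>j<n. Q j = P 2 j + face_dir P x j" by blast
    moreover define w where "w i = (if i = 3 then fst x else if i = 4 then snd x else 1 - fst x - snd x)"
      for i :: nat
    ultimately have "(\<Sum>i\<in>{2..4}. w i) = 1" "\<forall>j<n. Q j = (\<Sum>i\<in>{2..4}. w i * P i j)"
      unfolding sum_2_to_4 by (simp_all add: w_def face_dir_def algebra_simps)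
    then show "\<exists>l. (\<Sum>i\<in>{2..4}. l i) = 1 \<and> (\<forall>j<n. Q j = (\<Sum>i\<in>{2..4}. l i * P i j))"
      by blast
  qed
  then show ?thesis unfolding affL_def by blast
qed

lemma open_simplex_of_shift:
  assumes "B \<in> open_simplex n" "\<forall>j<n. B j + d j > 0" "(\<Sum>j<n. d j) = 0"
  shows "(\<lambda>j. if j < n then B j + d j else 0) \<in> open_simplex n"
  using assms by (simp add: open_simplex_def sum.distrib)

lemma proj_onto_face_exists:
  assumes rows: "\<forall>i\<in>{1..4}. P i \<in> open_simplex n" and gp: "general_position n 4 P"
    and R: "R \<in> open_simplex n"
  shows "\<exists>Q\<in>affL n P {2..4}. \<forall>Q''\<in>affL n P {2..4}. KL n Q R \<le> KL n Q'' R"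
proof -
  define ell where "ell x = (\<Sum>j<n. (P 2 j + face_dir P x j) * ln (R j))" for x
  have P2: "P 2 \<in> open_simplex n" using rows by simp
  have P2_pos: "\<forall>j<n. P 2 j > 0" using P2 open_simplex_pos by blast
  have "ell x - ell 0 = (\<Sum>j<n. face_dir P x j * ln (R j))" for x
    by (simp add: ell_def face_dir_def algebra_simps flip: sum_subtractf)
  then have ell_lin: "linear (\<lambda>x. ell x - ell 0)"
    by (intro linearI) (simp_all add: linear_add[OF linear_face_dir] linear_scale[OF linear_face_dir]
        distrib_right sum.distrib sum_distrib_left mult.assoc)
  obtain x where x_pos: "\<forall>j<n. P 2 j + face_dir P x j > 0" and x_max:
    "\<forall>y. (\<forall>j<n. 0 \<le> P 2 j + face_dir P y j) \<longrightarrow>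
      ell y - (\<Sum>j<n. xlnx (P 2 j + face_dir P y j)) \<le> ell x - (\<Sum>j<n. xlnx (P 2 j + face_dir P x j))"
    using exists_positive_maximiser[OF linear_face_dir face_dir_eq_0_imp[OF gp] P2_pos
        sum_face_dir[OF rows] ell_lin] by blast
  have KL_coords: "KL n S R = (\<Sum>j<n. xlnx (P 2 j + face_dir P y j)) - ell y"
    if "S \<in> open_simplex n" "\<forall>j<n. S j = P 2 j + face_dir P y j" for S y
  proof -
    have "\<forall>j<n. S j > 0" "\<forall>j<n. R j > 0" using that(1) R open_simplex_pos by blast+
    then have "KL n S R = (\<Sum>j<n. xlnx (S j)) - (\<Sum>j<n. S j * ln (R j))" by (rule KL_eq_xlnx_sum)
    then show ?thesis unfolding ell_def using that(2) by simp
  qed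
  define Q where "Q j = (if j < n then P 2 j + face_dir P x j else 0)" for j
  have Q_os: "Q \<in> open_simplex n"
    unfolding Q_def by (rule open_simplex_of_shift[OF P2 x_pos sum_face_dir[OF rows]])
  show ?thesis
  proof (rule bexI)
    have "\<forall>j<n. Q j = P 2 j + face_dir P x j" by (simp add: Q_def)
    then show "Q \<in> affL n P {2..4}" unfolding affL_2_4_iff using Q_os by blast
    show "\<forall>Q''\<in>affL n P {2..4}. KL n Q R \<le> KL n Q'' R"
    proof
      fix Q'' assume "Q'' \<in> affL n P {2..4}"
      then obtain y where Q'': "Q'' \<in> open_simplex n" "\<forall>j<n. Q'' j = P 2 j + face_dir P y j"
        unfolding affL_2_4_iff by blast
      then have "\<forall>j<n. 0 \<le> P 2 j + face_dir P y j" by (metis less_imp_le open_simplex_pos)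
      with x_max have "ell y - (\<Sum>j<n. xlnx (P 2 j + face_dir P y j))
                       \<le> ell x - (\<Sum>j<n. xlnx (P 2 j + face_dir P x j))" by blast
      then show "KL n Q R \<le> KL n Q'' R"
        using KL_coords[OF Q_os, of x] KL_coords[OF Q''] by (simp add: Q_def)
    qed
  qed
qed

lemma proj_onto_face:
  assumes rows: "\<forall>i\<in>{1..4}. P i \<in> open_simplex n" and gp: "general_position n 4 P"
    and R: "R \<in> open_simplex n"
  shows "proj n (affL n P {2..4}) R \<in> affL n P {2..4}"
    and "\<forall>Q''\<in>affL n P {2..4}. KL n (proj n (affL n P {2..4}) R) R \<le> KL n Q'' R"
proof -
  obtain Q where Q: "Q \<in> affL n P {2..4}" "\<forall>Q''\<in>affL n P {2..4}. KL n Q R \<le> KL n Q'' R"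
    using proj_onto_face_exists[OF rows gp R] by blast
  moreover have "proj n (affL n P {2..4}) R = Q" by (rule proj_eqI[OF Q(1) R Q(2)])
  ultimately show "proj n (affL n P {2..4}) R \<in> affL n P {2..4}"
    and "\<forall>Q''\<in>affL n P {2..4}. KL n (proj n (affL n P {2..4}) R) R \<le> KL n Q'' R" by blast+
qed

text \<open>With \<open>\<lambda>(x)\<close> the barycentric coordinate of \<open>Q\<^sub>x = P\<^sup>1 + hull_dir P x\<close>, the objective
  \<open>ell x - \<Sum>\<^sub>j xlnx (Q\<^sub>x j)\<close> below equals \<open>\<Sum>\<^sub>i \<lambda>\<^sub>i(x) D(P\<^sup>i\<parallel>Q\<^sub>x)\<close>, whose partial derivatives
  are \<open>D(P\<^sup>k\<parallel>Q\<^sub>x) - D(P\<^sup>1\<parallel>Q\<^sub>x)\<close>; hence its critical point is equidistant.\<close>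

lemma equidistant_point_exists:
  assumes rows: "\<forall>i\<in>{1..4}. P i \<in> open_simplex n" and gp: "general_position n 4 P"
  shows "\<exists>Q. Q \<in> affL n P {1..4} \<and> (\<forall>i\<in>{1..4}. KL n (P i) Q = KL n (P 1) Q)"
proof -
  define h where "h i = (\<Sum>j<n. xlnx (P i j))" for i
  define ell :: "real \<times> real \<times> real \<Rightarrow> real" where
    "ell x = h 1 + fst x * (h 2 - h 1) + fst (snd x) * (h 3 - h 1) + snd (snd x) * (h 4 - h 1)" for x
  have P1: "P 1 \<in> open_simplex n" using rows by simp
  have P1_pos: "\<forall>j<n. P 1 j > 0" using P1 open_simplex_pos by blast
  have ell_lin: "linear (\<lambda>x. ell x - ell 0)"
    by (intro linearI) (simp_all add: ell_def algebra_simps)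
  obtain x where x_pos: "\<forall>j<n. P 1 j + hull_dir P x j > 0" and x_max:
    "\<forall>y. (\<forall>j<n. 0 \<le> P 1 j + hull_dir P y j) \<longrightarrow>
      ell y - (\<Sum>j<n. xlnx (P 1 j + hull_dir P y j)) \<le> ell x - (\<Sum>j<n. xlnx (P 1 j + hull_dir P x j))"
    using exists_positive_maximiser[OF linear_hull_dir hull_dir_eq_0_imp[OF gp] P1_pos
        sum_hull_dir[OF rows] ell_lin] by blast
  define Q where "Q j = (if j < n then P 1 j + hull_dir P x j else 0)" for j
  have Q_os: "Q \<in> open_simplex n"
    unfolding Q_def by (rule open_simplex_of_shift[OF P1 x_pos sum_hull_dir[OF rows]])
  have "\<forall>j<n. Q j = P 1 j + hull_dir P x j" by (simp add: Q_def)
  then have Q_affL: "Q \<in> affL n P {1..4}" unfolding affL_1_4_iff using Q_os by blast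
  have critical: "ell d - ell 0 = (\<Sum>j<n. hull_dir P d j * ln (Q j))" for d
    using positive_maximiser_critical[OF linear_hull_dir sum_hull_dir[OF rows] ell_lin x_pos x_max]
    by (simp add: Q_def)
  have KL_row: "KL n (P i) Q = h i - (\<Sum>j<n. P i j * ln (Q j))" if "i \<in> {1..4}" for i
  proof -
    have "\<forall>j<n. P i j > 0" "\<forall>j<n. Q j > 0" using rows that Q_os open_simplex_pos by blast+
    then show ?thesis unfolding h_def by (rule KL_eq_xlnx_sum)
  qed
  have "KL n (P i) Q = KL n (P 1) Q" if "i \<in> {2..4}" for i
  proof -
    define d :: "real \<times> real \<times> real"
      where "d = (if i = 2 then (1, 0, 0) else if i = 3 then (0, 1, 0) else (0, 0, 1))"
    have "i = 2 \<or> i = 3 \<or> i = 4" using that by auto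
    then have "ell d - ell 0 = h i - h 1 \<and> (\<forall>j. hull_dir P d j = P i j - P 1 j)"
      by (elim disjE) (simp_all add: d_def ell_def hull_dir_def)
    then have "h i - h 1 = (\<Sum>j<n. (P i j - P 1 j) * ln (Q j))" using critical[of d] by auto
    then show ?thesis using KL_row[of i] KL_row[of 1] that by (simp add: algebra_simps sum_subtractf)
  qed
  moreover have "{1..4} = insert 1 {2..4::nat}" by auto
  ultimately have "\<forall>i\<in>{1..4}. KL n (P i) Q = KL n (P 1) Q" by simp
  with Q_affL show ?thesis by blast
qed

lemma equidistant_point:
  assumes rows: "\<forall>i\<in>{1..4}. P i \<in> open_simplex n" and gp: "general_position n 4 P"
  shows "equidistant n 4 P \<in> affL n P {1..4}"
    and "\<forall>i\<in>{1..4}. KL n (P i) (equidistant n 4 P) = KL n (P 1) (equidistant n 4 P)"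
proof -
  obtain Q where Q: "Q \<in> affL n P {1..4}" "\<forall>i\<in>{1..4}. KL n (P i) Q = KL n (P 1) Q"
    using equidistant_point_exists[OF rows gp] by blast
  moreover have "equidistant n 4 P = Q" by (rule equidistant_eqI[OF rows Q])
  ultimately show "equidistant n 4 P \<in> affL n P {1..4}"
    and "\<forall>i\<in>{1..4}. KL n (P i) (equidistant n 4 P) = KL n (P 1) (equidistant n 4 P)" by blast+
qed

lemma out_dist_eqI:
  assumes "Q \<in> open_simplex n" "\<forall>j<n. Q j = (\<Sum>i\<in>{1..m}. l i * P i j)"
  shows "out_dist n m P l = Q"
  using assms by (auto simp: out_dist_def open_simplex_zero not_less)

theorem theorem18:
  fixes n :: nat and P :: "nat \<Rightarrow> nat \<Rightarrow> real"
    and Q0 Q1 lam0 lam1 :: "nat \<Rightarrow> real"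
  assumes rows: "\<forall>i\<in>{1..4}. P i \<in> open_simplex n"
    and gp: "general_position n 4 P"
    and Q0: "Q0 = equidistant n 4 P"
    and lam0: "lam0 = bary n 4 P Q0"
    and neg1: "lam0 1 < 0"
    and nn0: "lam0 2 \<ge> 0" "lam0 3 \<ge> 0" "lam0 4 \<ge> 0"
    and Q1: "Q1 = proj n (affL n P {2..4}) Q0"
    and lam1: "lam1 = bary n 4 P Q1"
    and nn1: "lam1 2 \<ge> 0" "lam1 3 \<ge> 0" "lam1 4 \<ge> 0"
  shows "(\<exists>l\<in>closed_simplex 4. mutual_info n 4 P l = capacity n 4 P)
       \<and> (\<forall>l\<in>closed_simplex 4. mutual_info n 4 P l = capacity n 4 P \<longrightarrow> out_dist n 4 P l = Q1)
       \<and> capacity n 4 P = KL n (P 2) Q1"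
proof -
  have Q0_affL: "Q0 \<in> affL n P {1..4}" and Q0_eq: "\<forall>i\<in>{1..4}. KL n (P i) Q0 = KL n (P 1) Q0"
    unfolding Q0 by (rule equidistant_point[OF rows gp])+
  have Q0_os: "Q0 \<in> open_simplex n" using Q0_affL by (simp add: affL_def)
  have Q1_affL: "Q1 \<in> affL n P {2..4}" and Q1_min: "\<forall>Q''\<in>affL n P {2..4}. KL n Q1 Q0 \<le> KL n Q'' Q0"
    unfolding Q1 by (rule proj_onto_face[OF rows gp Q0_os])+
  have Q1_os: "Q1 \<in> open_simplex n" using Q1_affL by (simp add: affL_def)
  have lam0_sum: "(\<Sum>i\<in>{1..4}. lam0 i) = 1" and Q0_lam0: "\<forall>j<n. Q0 j = (\<Sum>i\<in>{1..4}. lam0 i * P i j)"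
    unfolding lam0 using bary_of_affL[OF gp order_refl Q0_affL] by blast+
  define C where "C = KL n (P 1) Q0 - KL n Q1 Q0"
  have C_face: "\<And>i. i \<in> {2..4} \<Longrightarrow> KL n (P i) Q1 = C" and C_first: "KL n (P 1) Q1 \<le> C"
    using KL_rows_at_face_projection[OF rows Q0_os Q0_lam0 lam0_sum neg1 Q0_eq Q1_affL Q1_min]
    unfolding C_def by simp_all
  have lam1_zero: "\<forall>i. i \<notin> {2..4} \<longrightarrow> lam1 i = 0"
    and lam1_sum: "(\<Sum>i\<in>{1..4}. lam1 i) = 1"
    and Q1_lam1: "\<forall>j<n. Q1 j = (\<Sum>i\<in>{1..4}. lam1 i * P i j)"
    unfolding lam1 using bary_of_affL[OF gp _ Q1_affL] by auto
  have one_to_four: "{1..4} = {1, 2, 3, 4 :: nat}" by auto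
  have lam1_cs: "lam1 \<in> closed_simplex 4"
    using lam1_zero lam1_sum nn1 unfolding closed_simplex_def one_to_four by auto
  have bound: "KL n (P i) Q1 \<le> C" if "i \<in> {1..4}" for i
    using that C_face C_first unfolding one_to_four by auto
  have tight: "KL n (P i) Q1 = C" if "i \<in> {1..4}" "lam1 i \<noteq> 0" for i
    using that lam1_zero C_face by auto
  note capacity = capacity_eqI[OF rows Q1_os lam1_cs out_dist_eqI[OF Q1_os Q1_lam1] bound tight]
  show ?thesis using capacity lam1_cs C_face[of 2] by auto
qed

end
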